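(* Let $B=(V,E,>)$ be a non-elementary $k$-simple ordered Bratteli diagram, let $X_B$ be its space of infinite paths and $\sigma:X_B\to X_B$ its Bratteli–Vershik map. Then $(X_B,\sigma)$ has exactly $k$ minimal subsets.
   Context: A Bratteli diagram $B=(V,E)$ has finite nonempty vertex sets $V^0=\{v_0\},V^1,V^2,\dots$ and finite edge sets $E^0,E^1,\dots$, with source and range maps $s(E^n)=V^n$, $r(E^n)=V^{n+1}$. Finite paths are sequences of consecutive edges; a vertex $w$ at level $m$ is connected to a vertex $v$ at level $n<m$ if some finite path goes from $v$ to $w$. $B$ is $k$-simple if for each $n\ge1$ there are pairwise disjoint $V^n_1,\dots,V^n_k\subseteq V^n$ with (i) $s(r^{-1}(v))\subseteq V^n_i$ for every $v\in V^{n+1}_i$; (ii) for each $i,n$ there is $m>n$ such that every vertex of $V^m_i$ is connected to every vertex of $V^n_i$. Put $V^n_o=V^n\setminus\bigcup_iV^n_i$. $B$ is non-elementary if for every $n$ there is $m>n$ such that the number of paths between any vertex of $V^n_o$ and any vertex of $V^m_o$ is either $0$ or at least $2$. An order on $B$ is a linear order on each $r^{-1}(v)$; it induces the lexicographic order on finite paths with common range (compare at the highest-level edge where they differ); $e+1$ denotes the successor of $e$. $E_{\max},E_{\min}$ are the maximal/minimal edges, $X_{\max},X_{\min}$ the infinite paths all of whose edges are maximal/minimal. $(V,E,>)$ is a $k$-simple ordered Bratteli diagram if: (1) $(V,E)$ is $k$-simple; (2) there are infinite paths $z_{i,\max},z_{i,\min}$ ($1\le i\le k$) whose level-$n$ vertices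 lie in $V^n_i$ for all $n\ge1$, with $X_{\max}=\{z_{1,\max},\dots,z_{k,\max}\}$, $X_{\min}=\{z_{1,\min},\dots,z_{k,\min}\}$; then there is $L$ such that for $n\ge L$ and $v\in V^n_o$ the maximal (resp. minimal) finite path from $v_0$ to $v$ passes at level $1$ through $V^1_i$ for some $i$, written $m_+(v)=i$ (resp. $m_-(v)=i$); (3) for $v\in V^n_o$: (a) for every edge $e$ with $s(e)=v$, $m_-(s(e+1))=m_+(v)$ (if $e$ is maximal, $s(e+1)$ means the level-$n$ source of the lexicographic successor of a non-maximal finite path starting with $e$ and ending at some level $m>n$); (b) if $e\notin E_{\max}$, $r(e)=v$, $s(e)\in V^{n-1}_i$ and $n\ge3$, then $m_-(s(e+1))=i$. The Vershik map: $\sigma(z_{i,\max})=z_{i,\min}$; for other $x=(x^1,x^2,\dots)$, let $d$ be least with $x^d$ not maximal, and set $\sigma(x)=(f^1,\dots,f^{d-1},x^d+1,x^{d+1},\dots)$ where $(f^1,\dots,f^{d-1})$ is the minimal path from $v_0$ to $s(x^d+1)$. $X_B$ carries the topology generated by cylinder sets and $\sigma$ is a homeomorphism. A minimal subset is a nonempty closed invariant set containing no nonempty proper closed invariant subset. *)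

theory Defs
  imports "HOL-Analysis.Analysis"
begin

text \<open>Vertices at level n form V n, edges from level n to level n+1 form E n
  (so the paper's E^n is E n, and the paper's path coordinate x^(n+1) is x n here).
  s and r are the source and range maps.\<close>

definition bratteli_diagram ::
  "(nat \<Rightarrow> 'v set) \<Rightarrow> (nat \<Rightarrow> 'e set) \<Rightarrow> ('e \<Rightarrow> 'v) \<Rightarrow> ('e \<Rightarrow> 'v) \<Rightarrow> 'v \<Rightarrow> bool" where
  "bratteli_diagram V E s r v0 \<longleftrightarrow>
     V 0 = {v0} \<and>
     (\<forall>n. finite (V n) \<and> V n \<noteq> {} \<and> finite (E n)) \<and>
     (\<forall>n. s ` E n = V n \<and> r ` E n = V (Suc n)) \<and>
     (\<forall>n m. n \<noteq> m \<longrightarrow> V n \<inter> V m = {} \<and> E n \<inter> E m = {})"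

definition fpaths :: "(nat \<Rightarrow> 'e set) \<Rightarrow> ('e \<Rightarrow> 'v) \<Rightarrow> ('e \<Rightarrow> 'v) \<Rightarrow> nat \<Rightarrow> nat \<Rightarrow> 'e list set" where
  "fpaths E s r n m = {p. length p = m - n \<and> (\<forall>j<length p. p!j \<in> E (n+j)) \<and>
                           (\<forall>j. Suc j < length p \<longrightarrow> r (p!j) = s (p!Suc j))}"

definition paths_between ::
  "(nat \<Rightarrow> 'e set) \<Rightarrow> ('e \<Rightarrow> 'v) \<Rightarrow> ('e \<Rightarrow> 'v) \<Rightarrow> nat \<Rightarrow> nat \<Rightarrow> 'v \<Rightarrow> 'v \<Rightarrow> 'e list set" where
  "paths_between E s r n m v w = {p \<in> fpaths E s r n m. n \<le> m \<and>
       (if p = [] then v = w else s (hd p) = v \<and> r (last p) = w)}"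

definition paths_to ::
  "(nat \<Rightarrow> 'e set) \<Rightarrow> ('e \<Rightarrow> 'v) \<Rightarrow> ('e \<Rightarrow> 'v) \<Rightarrow> nat \<Rightarrow> nat \<Rightarrow> 'v \<Rightarrow> 'e list set" where
  "paths_to E s r n m w = {p \<in> fpaths E s r n m. p \<noteq> [] \<and> r (last p) = w}"

definition connected_to ::
  "(nat \<Rightarrow> 'e set) \<Rightarrow> ('e \<Rightarrow> 'v) \<Rightarrow> ('e \<Rightarrow> 'v) \<Rightarrow> nat \<Rightarrow> nat \<Rightarrow> 'v \<Rightarrow> 'v \<Rightarrow> bool" where
  "connected_to E s r n m v w \<longleftrightarrow> n < m \<and> paths_between E s r n m v w \<noteq> {}"

text \<open>Vi n i is the set V^n_i (meaningful for n \<ge> 1 and 1 \<le> i \<le> k).\<close>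
definition k_simple ::
  "(nat \<Rightarrow> 'v set) \<Rightarrow> (nat \<Rightarrow> 'e set) \<Rightarrow> ('e \<Rightarrow> 'v) \<Rightarrow> ('e \<Rightarrow> 'v) \<Rightarrow> nat \<Rightarrow> (nat \<Rightarrow> nat \<Rightarrow> 'v set) \<Rightarrow> bool" where
  "k_simple V E s r k Vi \<longleftrightarrow>
     (\<forall>n\<ge>1. \<forall>i\<in>{1..k}. Vi n i \<subseteq> V n) \<and>
     (\<forall>n\<ge>1. \<forall>i\<in>{1..k}. \<forall>j\<in>{1..k}. i \<noteq> j \<longrightarrow> Vi n i \<inter> Vi n j = {}) \<and>
     (\<forall>n\<ge>1. \<forall>i\<in>{1..k}. \<forall>v\<in>Vi (Suc n) i. s ` {e \<in> E n. r e = v} \<subseteq> Vi n i) \<and>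
     (\<forall>n\<ge>1. \<forall>i\<in>{1..k}. \<exists>m>n. \<forall>w\<in>Vi m i. \<forall>v\<in>Vi n i. connected_to E s r n m v w)"

definition Vo :: "(nat \<Rightarrow> 'v set) \<Rightarrow> nat \<Rightarrow> (nat \<Rightarrow> nat \<Rightarrow> 'v set) \<Rightarrow> nat \<Rightarrow> 'v set" where
  "Vo V k Vi n = V n - (\<Union>i\<in>{1..k}. Vi n i)"

definition non_elementary ::
  "(nat \<Rightarrow> 'v set) \<Rightarrow> (nat \<Rightarrow> 'e set) \<Rightarrow> ('e \<Rightarrow> 'v) \<Rightarrow> ('e \<Rightarrow> 'v) \<Rightarrow> nat \<Rightarrow> (nat \<Rightarrow> nat \<Rightarrow> 'v set) \<Rightarrow> bool" where
  "non_elementary V E s r k Vi \<longleftrightarrow>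
     (\<forall>n\<ge>1. \<exists>m>n. \<forall>v\<in>Vo V k Vi n. \<forall>w\<in>Vo V k Vi m.
        card (paths_between E s r n m v w) = 0 \<or> card (paths_between E s r n m v w) \<ge> 2)"

text \<open>The order is a relation ord (pairs (e,e') meaning e < e') that relates only edges with a
  common range and is a strict linear order on each r^{-1}(v).\<close>
definition ordered_diagram ::
  "(nat \<Rightarrow> 'v set) \<Rightarrow> (nat \<Rightarrow> 'e set) \<Rightarrow> ('e \<Rightarrow> 'v) \<Rightarrow> ('e \<times> 'e) set \<Rightarrow> bool" where
  "ordered_diagram V E r ord \<longleftrightarrow>
     ord \<subseteq> {(a,b). \<exists>n. a \<in> E n \<and> b \<in> E n \<and> r a = r b} \<and>
     (\<forall>n. \<forall>v\<in>V (Suc n). strict_linear_order_on {e \<in> E n. r e = v} ord) \<and>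
     trans ord \<and> irrefl ord"

text \<open>Lexicographic order on finite paths with common range: compare at the highest edge
  where they differ.\<close>
definition lexless :: "('e \<times> 'e) set \<Rightarrow> 'e list \<Rightarrow> 'e list \<Rightarrow> bool" where
  "lexless ord p q \<longleftrightarrow> length p = length q \<and>
     (\<exists>j<length p. (p!j, q!j) \<in> ord \<and> (\<forall>i. j < i \<and> i < length p \<longrightarrow> p!i = q!i))"

definition lex_succ :: "('e \<times> 'e) set \<Rightarrow> 'e list set \<Rightarrow> 'e list \<Rightarrow> 'e list \<Rightarrow> bool" where
  "lex_succ ord P p q \<longleftrightarrow> p \<in> P \<and> q \<in> P \<and> lexless ord p q \<and>
     \<not> (\<exists>t\<in>P. lexless ord p t \<and> lexless ord t q)"

definition is_max_in :: "('e \<times> 'e) set \<Rightarrow> 'e list set \<Rightarrow> 'e list \<Rightarrow> bool" where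
  "is_max_in ord P p \<longleftrightarrow> p \<in> P \<and> (\<forall>q\<in>P. q \<noteq> p \<longrightarrow> lexless ord q p)"

definition is_min_in :: "('e \<times> 'e) set \<Rightarrow> 'e list set \<Rightarrow> 'e list \<Rightarrow> bool" where
  "is_min_in ord P p \<longleftrightarrow> p \<in> P \<and> (\<forall>q\<in>P. q \<noteq> p \<longrightarrow> lexless ord p q)"

definition emax :: "(nat \<Rightarrow> 'e set) \<Rightarrow> ('e \<Rightarrow> 'v) \<Rightarrow> ('e \<times> 'e) set \<Rightarrow> nat \<Rightarrow> 'e \<Rightarrow> bool" where
  "emax E r ord n e \<longleftrightarrow> e \<in> E n \<and> (\<forall>e'\<in>E n. r e' = r e \<longrightarrow> (e, e') \<notin> ord)"

definition emin :: "(nat \<Rightarrow> 'e set) \<Rightarrow> ('e \<Rightarrow> 'v) \<Rightarrow> ('e \<times> 'e) set \<Rightarrow> nat \<Rightarrow> 'e \<Rightarrow> bool" where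
  "emin E r ord n e \<longleftrightarrow> e \<in> E n \<and> (\<forall>e'\<in>E n. r e' = r e \<longrightarrow> (e', e) \<notin> ord)"

definition esucc :: "(nat \<Rightarrow> 'e set) \<Rightarrow> ('e \<Rightarrow> 'v) \<Rightarrow> ('e \<times> 'e) set \<Rightarrow> nat \<Rightarrow> 'e \<Rightarrow> 'e" where
  "esucc E r ord n e = (THE e'. e' \<in> E n \<and> r e' = r e \<and> (e, e') \<in> ord \<and>
      (\<forall>e''\<in>E n. r e'' = r e \<and> (e, e'') \<in> ord \<longrightarrow> e'' = e' \<or> (e', e'') \<in> ord))"

definition m_plus ::
  "(nat \<Rightarrow> 'e set) \<Rightarrow> ('e \<Rightarrow> 'v) \<Rightarrow> ('e \<Rightarrow> 'v) \<Rightarrow> ('e \<times> 'e) set \<Rightarrow> 'v \<Rightarrow> (nat \<Rightarrow> nat \<Rightarrow> 'v set)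
     \<Rightarrow> nat \<Rightarrow> 'v \<Rightarrow> nat \<Rightarrow> bool" where
  "m_plus E s r ord v0 Vi n v i \<longleftrightarrow>
     (\<exists>p. is_max_in ord (paths_between E s r 0 n v0 v) p \<and> r (p!0) \<in> Vi 1 i)"

definition m_minus ::
  "(nat \<Rightarrow> 'e set) \<Rightarrow> ('e \<Rightarrow> 'v) \<Rightarrow> ('e \<Rightarrow> 'v) \<Rightarrow> ('e \<times> 'e) set \<Rightarrow> 'v \<Rightarrow> (nat \<Rightarrow> nat \<Rightarrow> 'v set)
     \<Rightarrow> nat \<Rightarrow> 'v \<Rightarrow> nat \<Rightarrow> bool" where
  "m_minus E s r ord v0 Vi n v i \<longleftrightarrow>
     (\<exists>p. is_min_in ord (paths_between E s r 0 n v0 v) p \<and> r (p!0) \<in> Vi 1 i)"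

definition XB :: "(nat \<Rightarrow> 'e set) \<Rightarrow> ('e \<Rightarrow> 'v) \<Rightarrow> ('e \<Rightarrow> 'v) \<Rightarrow> (nat \<Rightarrow> 'e) set" where
  "XB E s r = {x. \<forall>n. x n \<in> E n \<and> r (x n) = s (x (Suc n))}"

definition Xmax :: "(nat \<Rightarrow> 'e set) \<Rightarrow> ('e \<Rightarrow> 'v) \<Rightarrow> ('e \<Rightarrow> 'v) \<Rightarrow> ('e \<times> 'e) set \<Rightarrow> (nat \<Rightarrow> 'e) set" where
  "Xmax E s r ord = {x \<in> XB E s r. \<forall>n. emax E r ord n (x n)}"

definition Xmin :: "(nat \<Rightarrow> 'e set) \<Rightarrow> ('e \<Rightarrow> 'v) \<Rightarrow> ('e \<Rightarrow> 'v) \<Rightarrow> ('e \<times> 'e) set \<Rightarrow> (nat \<Rightarrow> 'e) set" where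
  "Xmin E s r ord = {x \<in> XB E s r. \<forall>n. emin E r ord n (x n)}"

definition cylinders :: "(nat \<Rightarrow> 'e set) \<Rightarrow> ('e \<Rightarrow> 'v) \<Rightarrow> ('e \<Rightarrow> 'v) \<Rightarrow> (nat \<Rightarrow> 'e) set set" where
  "cylinders E s r = {{x \<in> XB E s r. \<forall>j<length c. x j = c!j} | c. True}"

definition XB_topology :: "(nat \<Rightarrow> 'e set) \<Rightarrow> ('e \<Rightarrow> 'v) \<Rightarrow> ('e \<Rightarrow> 'v) \<Rightarrow> (nat \<Rightarrow> 'e) topology" where
  "XB_topology E s r = topology_generated_by (cylinders E s r)"

definition vershik ::
  "(nat \<Rightarrow> 'e set) \<Rightarrow> ('e \<Rightarrow> 'v) \<Rightarrow> ('e \<Rightarrow> 'v) \<Rightarrow> 'v \<Rightarrow> ('e \<times> 'e) set \<Rightarrow> nat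
     \<Rightarrow> (nat \<Rightarrow> nat \<Rightarrow> 'e) \<Rightarrow> (nat \<Rightarrow> nat \<Rightarrow> 'e) \<Rightarrow> (nat \<Rightarrow> 'e) \<Rightarrow> (nat \<Rightarrow> 'e)" where
  "vershik E s r v0 ord k zmax zmin x =
     (if \<exists>i\<in>{1..k}. x = zmax i then zmin (SOME i. i \<in> {1..k} \<and> x = zmax i)
      else (let d = (LEAST d. \<not> emax E r ord d (x d));
                e' = esucc E r ord d (x d);
                f = (THE f. is_min_in ord (paths_between E s r 0 d v0 (s e')) f)
            in (\<lambda>j. if j < d then f!j else if j = d then e' else x j)))"

definition k_simple_ordered ::
  "(nat \<Rightarrow> 'v set) \<Rightarrow> (nat \<Rightarrow> 'e set) \<Rightarrow> ('e \<Rightarrow> 'v) \<Rightarrow> ('e \<Rightarrow> 'v) \<Rightarrow> 'v \<Rightarrow> ('e \<times> 'e) set \<Rightarrow> nat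
     \<Rightarrow> (nat \<Rightarrow> nat \<Rightarrow> 'v set) \<Rightarrow> (nat \<Rightarrow> nat \<Rightarrow> 'e) \<Rightarrow> (nat \<Rightarrow> nat \<Rightarrow> 'e) \<Rightarrow> bool" where
  "k_simple_ordered V E s r v0 ord k Vi zmax zmin \<longleftrightarrow>
     \<comment> \<open>(1)\<close>
     k_simple V E s r k Vi \<and>
     \<comment> \<open>(2)\<close>
     (\<forall>i\<in>{1..k}. zmax i \<in> XB E s r \<and> zmin i \<in> XB E s r \<and>
        (\<forall>n\<ge>1. s (zmax i n) \<in> Vi n i \<and> s (zmin i n) \<in> Vi n i)) \<and>
     Xmax E s r ord = zmax ` {1..k} \<and> Xmin E s r ord = zmin ` {1..k} \<and>
     \<comment> \<open>(3a), e not maximal: s(e+1) is the source of the successor edge\<close>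
     (\<forall>n\<ge>1. \<forall>v\<in>Vo V k Vi n. \<forall>e\<in>E n. s e = v \<longrightarrow> \<not> emax E r ord n e \<longrightarrow>
        (\<forall>i. m_plus E s r ord v0 Vi n v i \<longrightarrow>
             m_minus E s r ord v0 Vi n (s (esucc E r ord n e)) i)) \<and>
     \<comment> \<open>(3a), e maximal: s(e+1) is the level-n source of the lexicographic successor of a
         non-maximal finite path starting with e\<close>
     (\<forall>n\<ge>1. \<forall>v\<in>Vo V k Vi n. \<forall>e\<in>E n. s e = v \<longrightarrow> emax E r ord n e \<longrightarrow>
        (\<forall>m>n. \<forall>w p q. p \<in> paths_to E s r n m w \<longrightarrow> p!0 = e \<longrightarrow>
            lex_succ ord (paths_to E s r n m w) p q \<longrightarrow>
            (\<forall>i. m_plus E s r ord v0 Vi n v i \<longrightarrow> m_minus E s r ord v0 Vi n (s (q!0)) i))) \<and>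
     \<comment> \<open>(3b)\<close>
     (\<forall>n\<ge>3. \<forall>v\<in>Vo V k Vi n. \<forall>e\<in>E (n - 1). \<forall>i\<in>{1..k}.
        \<not> emax E r ord (n - 1) e \<longrightarrow> r e = v \<longrightarrow> s e \<in> Vi (n - 1) i \<longrightarrow>
        m_minus E s r ord v0 Vi (n - 1) (s (esucc E r ord (n - 1) e)) i)"

definition minimal_subset :: "'a topology \<Rightarrow> ('a \<Rightarrow> 'a) \<Rightarrow> 'a set \<Rightarrow> bool" where
  "minimal_subset T f A \<longleftrightarrow> A \<noteq> {} \<and> closedin T A \<and> f ` A = A \<and>
     (\<forall>B. B \<subseteq> A \<and> B \<noteq> {} \<and> closedin T B \<and> f ` B = B \<longrightarrow> B = A)"

end

theory Submission
  imports Defs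
begin

(* The minimal sets are the sets Vi_paths i of paths passing through V^n_i at every level n >= 1.
   Since the edges into V^(n+1)_i start in V^n_i, each of them is closed and sigma-invariant.
   On a tail class (paths agreeing from some level on) sigma acts as the lexicographic successor,
   so the orbit of any path contains paths whose first N edges are maximal, for every N; by
   Koenig's lemma these accumulate at a maximal path z_(i,max). Hence every nonempty closed
   forward-invariant set contains some z_(i,max), and with it z_(i,min) = sigma z_(i,max). Because
   V^m_i is connected to V^n_i for m large, each path of Vi_paths i is approximated by paths in the
   tail class of z_(i,min), which all lie on the forward orbit of z_(i,min). *)

lemma finite_total_ex1_least:
  assumes "finite A" "A \<noteq> {}"
    and trans: "\<And>a b c. P a b \<Longrightarrow> P b c \<Longrightarrow> P a c"
    and asym: "\<And>a b. P a b \<Longrightarrow> \<not> P b a"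
    and total: "\<And>a b. a \<in> A \<Longrightarrow> b \<in> A \<Longrightarrow> a \<noteq> b \<Longrightarrow> P a b \<or> P b a"
  shows "\<exists>!m. m \<in> A \<and> (\<forall>a\<in>A. a \<noteq> m \<longrightarrow> P m a)"
proof (rule ex_ex1I)
  show "\<exists>m. m \<in> A \<and> (\<forall>a\<in>A. a \<noteq> m \<longrightarrow> P m a)"
    using assms(1,2) total
  proof (induction A rule: finite_ne_induct)
    case (singleton x)
    then show ?case by auto
  next
    case (insert x F)
    then obtain m where m: "m \<in> F" "\<forall>a\<in>F. a \<noteq> m \<longrightarrow> P m a" by auto
    show ?case
    proof (cases "P x m")
      case True
      then show ?thesis using m trans by (intro exI[of _ x]) auto
    next
      case False
      then have "P m x" using insert.prems[of x m] m insert.hyps by auto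
      then show ?thesis using m by (intro exI[of _ m]) auto
    qed
  qed
next
  fix m m'
  assume m: "m \<in> A \<and> (\<forall>a\<in>A. a \<noteq> m \<longrightarrow> P m a)"
    and m': "m' \<in> A \<and> (\<forall>a\<in>A. a \<noteq> m' \<longrightarrow> P m' a)"
  show "m = m'"
  proof (rule ccontr)
    assume "m \<noteq> m'"
    then have "P m m'" "P m' m" using m m' by auto
    then show False using asym by blast
  qed
qed

lemma funpow_in_invariant: "f ` B \<subseteq> B \<Longrightarrow> x \<in> B \<Longrightarrow> (f ^^ j) x \<in> B"
  by (induction j) auto

text \<open>Koenig's lemma: S (Suc L) keeps the indices in S L whose value at L is taken
  infinitely often on S L.\<close>
lemma finitely_branching_limit:
  fixes y :: "nat \<Rightarrow> nat \<Rightarrow> 'a"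
  assumes in_F: "\<And>N L. y N L \<in> F L" and finite_F: "\<And>L. finite (F L)"
  obtains z where "\<And>L. infinite {N. \<forall>j<L. y N j = z j}"
proof -
  define pick where "pick A L = (SOME e. infinite {N \<in> A. y N L = e})" for A L
  define S where "S = rec_nat UNIV (\<lambda>L A. {N \<in> A. y N L = pick A L})"
  have S_Suc: "S (Suc L) = {N \<in> S L. y N L = pick (S L) L}" for L
    by (simp add: S_def)
  have S_infinite: "infinite (S L)" for L
  proof (induction L)
    case 0
    then show ?case by (simp add: S_def)
  next
    case (Suc L)
    have "finite ((\<lambda>N. y N L) ` S L)"
      by (rule finite_subset[OF _ finite_F[of L]]) (use in_F in auto)
    from pigeonhole_infinite[OF Suc this] obtain N0 where
      "infinite {N \<in> S L. y N L = y N0 L}" by auto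
    then have "infinite {N \<in> S L. y N L = pick (S L) L}"
      unfolding pick_def by (rule someI)
    then show ?case by (simp add: S_Suc)
  qed
  have S_agrees: "y N j = pick (S j) j" if "N \<in> S L" "j < L" for N L j
    using that by (induction L arbitrary: N) (auto simp: S_Suc less_Suc_eq)
  show thesis
  proof (rule that)
    fix L
    have "S L \<subseteq> {N. \<forall>j<L. y N j = pick (S j) j}" using S_agrees by blast
    then show "infinite {N. \<forall>j<L. y N j = pick (S j) j}"
      using S_infinite finite_subset by blast
  qed
qed

section \<open>The cylinder topology on the path space\<close>

lemma topspace_XB_topology: "topspace (XB_topology E s r) = XB E s r"
proof -
  have "XB E s r \<in> cylinders E s r"
    unfolding cylinders_def by (intro CollectI exI[of _ "[]"]) simp
  moreover have "\<Union>(cylinders E s r) \<subseteq> XB E s r"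
    unfolding cylinders_def by auto
  ultimately have "\<Union>(cylinders E s r) = XB E s r"
    by blast
  then show ?thesis
    unfolding XB_topology_def topology_generated_by_topspace by simp
qed

lemma openin_XB_topology_cylinder:
  "openin (XB_topology E s r) {y \<in> XB E s r. \<forall>j<L. y j = z j}"
proof -
  have "{y \<in> XB E s r. \<forall>j<L. y j = z j} \<in> cylinders E s r"
    unfolding cylinders_def by (intro CollectI exI[of _ "map z [0..<L]"]) simp
  then show ?thesis
    unfolding XB_topology_def by (rule topology_generated_by_Basis)
qed

lemma openin_XB_topology_contains_cylinder:
  assumes "openin (XB_topology E s r) U" "z \<in> U"
  obtains L where "{y \<in> XB E s r. \<forall>j<L. y j = z j} \<subseteq> U"
proof -
  have "generate_topology_on (cylinders E s r) U"
    using assms(1) unfolding XB_topology_def by (rule openin_topology_generated_by)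
  then have "\<exists>L. {y \<in> XB E s r. \<forall>j<L. y j = z j} \<subseteq> U"
    using assms(2)
  proof (induction rule: generate_topology_on.induct)
    case Empty
    then show ?case by simp
  next
    case (Int a b)
    obtain La where "{y \<in> XB E s r. \<forall>j<La. y j = z j} \<subseteq> a"
      using Int.IH(1) Int.prems by blast
    moreover obtain Lb where "{y \<in> XB E s r. \<forall>j<Lb. y j = z j} \<subseteq> b"
      using Int.IH(2) Int.prems by blast
    moreover have "{y \<in> XB E s r. \<forall>j<max La Lb. y j = z j}
        \<subseteq> {y \<in> XB E s r. \<forall>j<La. y j = z j} \<inter> {y \<in> XB E s r. \<forall>j<Lb. y j = z j}"
      by auto
    ultimately show ?case by blast
  next
    case (UN K)
    then obtain U where U: "U \<in> K" "z \<in> U" by blast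
    then obtain L where "{y \<in> XB E s r. \<forall>j<L. y j = z j} \<subseteq> U"
      using UN.IH by blast
    then show ?case using U(1) by blast
  next
    case (Basis c)
    then obtain cl where "c = {x \<in> XB E s r. \<forall>j<length cl. x j = cl!j}"
      unfolding cylinders_def by blast
    then have "{y \<in> XB E s r. \<forall>j<length cl. y j = z j} \<subseteq> c"
      using Basis.prems by auto
    then show ?case by blast
  qed
  then show thesis using that by blast
qed

lemma closedin_XB_topology_limit:
  assumes "closedin (XB_topology E s r) B" "z \<in> XB E s r"
    and approx: "\<And>L. \<exists>y\<in>B. \<forall>j<L. y j = z j"
  shows "z \<in> B"
proof (rule ccontr)
  assume "z \<notin> B"
  then have z: "z \<in> XB E s r - B" using assms(2) by simp
  have "openin (XB_topology E s r) (XB E s r - B)"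
    using assms(1) unfolding closedin_def topspace_XB_topology by simp
  then obtain L where L: "{y \<in> XB E s r. \<forall>j<L. y j = z j} \<subseteq> XB E s r - B"
    using z by (rule openin_XB_topology_contains_cylinder)
  obtain y where "y \<in> B" "\<forall>j<L. y j = z j" using approx by blast
  moreover have "B \<subseteq> XB E s r"
    using closedin_subset[OF assms(1)] by (simp add: topspace_XB_topology)
  ultimately show False using L by blast
qed

section \<open>Finite paths and tail classes\<close>

locale bratteli =
  fixes V :: "nat \<Rightarrow> 'v set" and E :: "nat \<Rightarrow> 'e set" and s r :: "'e \<Rightarrow> 'v" and v0 :: 'v
  assumes bratteli: "bratteli_diagram V E s r v0"
begin

lemma V_0: "V 0 = {v0}"
  and finite_E: "finite (E n)"
  and source_image: "s ` E n = V n"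
  and range_image: "r ` E n = V (Suc n)"
  using bratteli by (simp_all add: bratteli_diagram_def)

lemma XB_edge: "x \<in> XB E s r \<Longrightarrow> x n \<in> E n"
  and XB_range: "x \<in> XB E s r \<Longrightarrow> r (x n) = s (x (Suc n))"
  by (simp_all add: XB_def)

lemma XB_source_0: "x \<in> XB E s r \<Longrightarrow> s (x 0) = v0"
  using XB_edge[of x 0] source_image[of 0] V_0 by blast

lemma XB_same_range:
  "a \<in> XB E s r \<Longrightarrow> b \<in> XB E s r \<Longrightarrow> a (Suc j) = b (Suc j) \<Longrightarrow> r (a j) = r (b j)"
  by (simp add: XB_range)

abbreviation root_paths :: "nat \<Rightarrow> 'v \<Rightarrow> 'e list set" where
  "root_paths d u \<equiv> paths_between E s r 0 d v0 u"

lemma root_paths_iff: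
  "p \<in> root_paths d u \<longleftrightarrow> length p = d \<and> (\<forall>j<d. p!j \<in> E j) \<and>
     (\<forall>j. Suc j < d \<longrightarrow> r (p!j) = s (p!Suc j)) \<and>
     (if d = 0 then u = v0 else s (p!0) = v0 \<and> r (p!(d-1)) = u)"
  by (cases "d = 0") (auto simp: paths_between_def fpaths_def hd_conv_nth last_conv_nth)

lemma paths_between_iff:
  assumes "n < m"
  shows "q \<in> paths_between E s r n m u w \<longleftrightarrow> length q = m - n \<and> (\<forall>j<m-n. q!j \<in> E (n+j)) \<and>
     (\<forall>j. Suc j < m-n \<longrightarrow> r (q!j) = s (q!Suc j)) \<and> s (q!0) = u \<and> r (q!(m-n-1)) = w"
  using assms by (auto simp: paths_between_def fpaths_def hd_conv_nth last_conv_nth)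

lemma prefix_in_root_paths: "t \<in> XB E s r \<Longrightarrow> map t [0..<d] \<in> root_paths d (s (t d))"
  using XB_range[of t "d - 1"] by (auto simp: root_paths_iff XB_edge XB_range XB_source_0)

lemma root_paths_snoc:
  assumes "p \<in> root_paths d (s e)" "e \<in> E d"
  shows "p @ [e] \<in> root_paths (Suc d) (r e)"
proof -
  have "length p = d" using assms(1) by (simp add: root_paths_iff)
  moreover have "d = 0 \<Longrightarrow> s e = v0" using assms(2) source_image[of 0] V_0 by blast
  ultimately show ?thesis
    using assms by (auto simp: root_paths_iff nth_append less_Suc_eq not_less) (metis diff_Suc_Suc diff_zero)
qed

lemma root_paths_append:
  assumes p: "p \<in> root_paths n u" and q: "q \<in> paths_between E s r n m u w" and "n < m"
  shows "p @ q \<in> root_paths m w"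
proof -
  have lp: "length p = n" using p by (simp add: root_paths_iff)
  note q' = q[unfolded paths_between_iff[OF \<open>n < m\<close>]]
  have edges: "(p @ q)!j \<in> E j" if "j < m" for j
  proof (cases "j < n")
    case True
    then show ?thesis using p lp by (simp add: nth_append root_paths_iff)
  next
    case False
    then have "j - n < m - n" using that by simp
    then have "q!(j - n) \<in> E (n + (j - n))" using q' by blast
    then show ?thesis using False lp by (simp add: nth_append)
  qed
  have links: "r ((p @ q)!j) = s ((p @ q)!Suc j)" if "Suc j < m" for j
  proof -
    consider "Suc j < n" | "Suc j = n" | "n \<le> j" using that by linarith
    then show ?thesis
    proof cases
      case 1
      then show ?thesis using p lp by (simp add: nth_append root_paths_iff)
    next
      case 2
      then show ?thesis using p q' lp by (auto simp: nth_append root_paths_iff)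
    next
      case 3
      then have "Suc j - n = Suc (j - n)" by simp
      then show ?thesis using q' lp 3 that by (simp add: nth_append)
    qed
  qed
  have ends: "s ((p @ q)!0) = v0 \<and> r ((p @ q)!(m-1)) = w"
    using p q' lp \<open>n < m\<close> by (cases "n = 0") (auto simp: nth_append root_paths_iff)
  show ?thesis
    unfolding root_paths_iff using edges links ends lp q' \<open>n < m\<close> by auto
qed

lemma root_paths_exist: "u \<in> V d \<Longrightarrow> \<exists>p. p \<in> root_paths d u"
proof (induction d arbitrary: u)
  case 0
  then show ?case using V_0 by (intro exI[of _ "[]"]) (simp add: root_paths_iff)
next
  case (Suc d)
  then obtain e where e: "e \<in> E d" "r e = u" using range_image[of d] by (metis imageE)
  then have "s e \<in> V d" using source_image by blast
  then obtain p where "p \<in> root_paths d (s e)" using Suc.IH by blast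
  then show ?case using root_paths_snoc e by blast
qed

lemma splice_root_path_XB:
  assumes g: "g \<in> root_paths m (s (x m))" and x: "x \<in> XB E s r"
  shows "(\<lambda>j. if j < m then g!j else x j) \<in> XB E s r"
  unfolding XB_def
proof (intro CollectI allI conjI)
  fix n
  show "(if n < m then g!n else x n) \<in> E n"
    using g x XB_edge by (auto simp: root_paths_iff)
  consider "Suc n < m" | "Suc n = m" | "m \<le> n" by linarith
  then show "r (if n < m then g!n else x n) = s (if Suc n < m then g!Suc n else x (Suc n))"
  proof cases
    case 1
    then show ?thesis using g by (simp add: root_paths_iff)
  next
    case 2
    then have "n = m - 1" "m \<noteq> 0" by auto
    then show ?thesis using g 2 by (simp add: root_paths_iff)
  next
    case 3
    then show ?thesis using x XB_range by auto
  qed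
qed

lemma finite_root_paths: "finite (root_paths d u)"
proof (rule finite_subset)
  show "root_paths d u \<subseteq> {xs. set xs \<subseteq> (\<Union>j<d. E j) \<and> length xs = d}"
    by (auto simp: root_paths_iff in_set_conv_nth) blast
  show "finite {xs. set xs \<subseteq> (\<Union>j<d. E j) \<and> length xs = d}"
    by (rule finite_lists_length_eq) (simp add: finite_E)
qed

definition tail_class :: "nat \<Rightarrow> (nat \<Rightarrow> 'e) \<Rightarrow> (nat \<Rightarrow> 'e) set" where
  "tail_class N x = {y \<in> XB E s r. \<forall>n\<ge>N. y n = x n}"

lemma self_in_tail_class: "x \<in> XB E s r \<Longrightarrow> x \<in> tail_class N x"
  by (simp add: tail_class_def)

lemma tail_class_eq: "y \<in> tail_class N x \<Longrightarrow> tail_class N y = tail_class N x"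
  by (auto simp: tail_class_def)

lemma finite_tail_class: "finite (tail_class N x)"
proof -
  have "inj_on (\<lambda>y. map y [0..<N]) (tail_class N x)"
  proof
    fix y z assume yz: "y \<in> tail_class N x" "z \<in> tail_class N x" "map y [0..<N] = map z [0..<N]"
    show "y = z"
    proof
      fix n
      show "y n = z n"
        using yz by (cases "n < N") (auto simp: tail_class_def map_eq_conv)
    qed
  qed
  moreover have "(\<lambda>y. map y [0..<N]) ` tail_class N x \<subseteq> {xs. set xs \<subseteq> (\<Union>j<N. E j) \<and> length xs = N}"
    by (auto simp: tail_class_def) (blast intro: XB_edge)
  moreover have "finite {xs. set xs \<subseteq> (\<Union>j<N. E j) \<and> length xs = N}"
    by (rule finite_lists_length_eq) (simp add: finite_E)
  ultimately show ?thesis using finite_imageD finite_subset by blast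
qed

end

section \<open>Lexicographic order\<close>

locale ordered_bratteli = bratteli V E s r v0
  for V :: "nat \<Rightarrow> 'v set" and E :: "nat \<Rightarrow> 'e set" and s r :: "'e \<Rightarrow> 'v" and v0 :: 'v +
  fixes ord :: "('e \<times> 'e) set"
  assumes ordered: "ordered_diagram V E r ord"
begin

lemma ord_trans: "(a, b) \<in> ord \<Longrightarrow> (b, c) \<in> ord \<Longrightarrow> (a, c) \<in> ord"
  using ordered unfolding ordered_diagram_def trans_def by blast

lemma ord_irrefl: "(a, a) \<notin> ord"
  using ordered unfolding ordered_diagram_def irrefl_def by blast

lemma ord_total:
  assumes "a \<in> E n" "b \<in> E n" "r a = r b" "a \<noteq> b"
  shows "(a, b) \<in> ord \<or> (b, a) \<in> ord"
proof -
  have "r a \<in> V (Suc n)" using assms(1) range_image by blast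
  then have "total_on {e \<in> E n. r e = r a} ord"
    using ordered unfolding ordered_diagram_def strict_linear_order_on_def by blast
  then show ?thesis using assms unfolding total_on_def by auto
qed

definition lex_lt :: "nat \<Rightarrow> (nat \<Rightarrow> 'e) \<Rightarrow> (nat \<Rightarrow> 'e) \<Rightarrow> bool" where
  "lex_lt N a b \<longleftrightarrow> (\<exists>j<N. (a j, b j) \<in> ord \<and> (\<forall>i. j < i \<and> i < N \<longrightarrow> a i = b i))"

lemma lex_lt_trans:
  assumes "lex_lt N a b" "lex_lt N b c"
  shows "lex_lt N a c"
proof -
  obtain j1 where j1: "j1 < N" "(a j1, b j1) \<in> ord" "\<forall>i. j1 < i \<and> i < N \<longrightarrow> a i = b i"
    using assms(1) unfolding lex_lt_def by blast
  obtain j2 where j2: "j2 < N" "(b j2, c j2) \<in> ord" "\<forall>i. j2 < i \<and> i < N \<longrightarrow> b i = c i"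
    using assms(2) unfolding lex_lt_def by blast
  show ?thesis
  proof (cases j1 j2 rule: linorder_cases)
    case less
    then show ?thesis using j1 j2 unfolding lex_lt_def by (intro exI[of _ j2]) auto
  next
    case equal
    then show ?thesis using j1 j2 ord_trans unfolding lex_lt_def by (intro exI[of _ j2]) auto
  next
    case greater
    then show ?thesis using j1 j2 unfolding lex_lt_def by (intro exI[of _ j1]) auto
  qed
qed

lemma lex_lt_irrefl: "\<not> lex_lt N a a"
  using ord_irrefl unfolding lex_lt_def by auto

lemma lex_lt_asym: "lex_lt N a b \<Longrightarrow> \<not> lex_lt N b a"
  using lex_lt_trans lex_lt_irrefl by blast

lemma lex_lt_extend:
  assumes "lex_lt d a b" "d \<le> N" "\<And>i. d \<le> i \<Longrightarrow> i < N \<Longrightarrow> a i = b i"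
  shows "lex_lt N a b"
proof -
  obtain j where j: "j < d" "(a j, b j) \<in> ord" "\<forall>i. j < i \<and> i < d \<longrightarrow> a i = b i"
    using assms(1) unfolding lex_lt_def by blast
  have "a i = b i" if "j < i" "i < N" for i
    using j(3) assms(3) that by (cases "i < d") auto
  then show ?thesis
    unfolding lex_lt_def using assms(2) j(1,2) by (intro exI[of _ j]) auto
qed

lemma lex_lt_cong:
  assumes "\<And>j. j < N \<Longrightarrow> a j = a' j" "\<And>j. j < N \<Longrightarrow> b j = b' j"
  shows "lex_lt N a b \<longleftrightarrow> lex_lt N a' b'"
  unfolding lex_lt_def using assms by auto

lemma lex_lt_total:
  assumes "\<exists>j<N. a j \<noteq> b j" and "\<And>j. j < N \<Longrightarrow> a j \<in> E j \<and> b j \<in> E j"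
    and "\<And>j. j < N \<Longrightarrow> \<forall>i. j < i \<and> i < N \<longrightarrow> a i = b i \<Longrightarrow> r (a j) = r (b j)"
  shows "lex_lt N a b \<or> lex_lt N b a"
proof -
  define D where "D = {j. j < N \<and> a j \<noteq> b j}"
  have D: "finite D" "D \<noteq> {}" using assms(1) by (auto simp: D_def)
  define j where "j = Max D"
  have "j \<in> D" using Max_in[OF D] by (simp add: j_def)
  then have j: "j < N" "a j \<noteq> b j" by (simp_all add: D_def)
  have above: "\<forall>i. j < i \<and> i < N \<longrightarrow> a i = b i"
  proof (intro allI impI, rule ccontr)
    fix i assume i: "j < i \<and> i < N" "a i \<noteq> b i"
    then have "i \<le> j" using Max_ge[OF D(1)] by (simp add: D_def j_def)
    then show False using i by simp
  qed
  have "lex_lt N a b" if "(a j, b j) \<in> ord"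
    unfolding lex_lt_def using that above j(1) by (intro exI[of _ j]) auto
  moreover have "lex_lt N b a" if "(b j, a j) \<in> ord"
    unfolding lex_lt_def using that above j(1) by (intro exI[of _ j]) auto
  ultimately show ?thesis
    using ord_total[of "a j" j "b j"] assms(2)[OF j(1)] assms(3)[OF j(1) above] j(2) by blast
qed

lemma tail_class_lex_lt_total:
  assumes "y \<in> tail_class N x" "z \<in> tail_class N x" "y \<noteq> z"
  shows "lex_lt N y z \<or> lex_lt N z y"
proof (rule lex_lt_total)
  show "\<exists>j<N. y j \<noteq> z j"
  proof (rule ccontr)
    assume "\<not> (\<exists>j<N. y j \<noteq> z j)"
    then have "y n = z n" for n
      using assms(1,2) by (cases "n < N") (auto simp: tail_class_def)
    then show False using assms(3) by blast
  qed
  show "y j \<in> E j \<and> z j \<in> E j" for j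
    using assms(1,2) by (auto simp: tail_class_def XB_edge)
  fix j assume "j < N" "\<forall>i. j < i \<and> i < N \<longrightarrow> y i = z i"
  then have "y (Suc j) = z (Suc j)"
    using assms(1,2) by (cases "Suc j < N") (auto simp: tail_class_def)
  moreover have "y \<in> XB E s r" "z \<in> XB E s r" using assms(1,2) by (simp_all add: tail_class_def)
  ultimately show "r (y j) = r (z j)" by (intro XB_same_range)
qed

lemma lex_lt_tail_classE:
  assumes "lex_lt N a b" "b \<in> tail_class N a" "a \<in> XB E s r"
  obtains j where "j < N" "(a j, b j) \<in> ord" "r (a j) = r (b j)" "\<forall>i>j. a i = b i"
proof -
  obtain j where j: "j < N" "(a j, b j) \<in> ord" "\<forall>i. j < i \<and> i < N \<longrightarrow> a i = b i"
    using assms(1) unfolding lex_lt_def by blast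
  have above: "\<forall>i>j. a i = b i"
  proof (intro allI impI)
    fix i assume "j < i"
    then show "a i = b i" using j(3) assms(2) by (cases "i < N") (auto simp: tail_class_def)
  qed
  moreover have "b \<in> XB E s r" using assms(2) by (simp add: tail_class_def)
  ultimately have "r (a j) = r (b j)"
    using XB_same_range[OF assms(3)] by simp
  then show thesis using that j(1,2) above by blast
qed

lemma emin_path_least_in_tail_class:
  assumes z: "z \<in> XB E s r" "\<And>n. emin E r ord n (z n)"
    and t: "t \<in> tail_class N z" "t \<noteq> z"
  shows "lex_lt N z t"
proof -
  have "\<not> lex_lt N t z"
  proof
    assume "lex_lt N t z"
    moreover have "z \<in> tail_class N t"
      using tail_class_eq[OF t(1)] self_in_tail_class[OF z(1)] by simp
    moreover have "t \<in> XB E s r" using t(1) by (simp add: tail_class_def)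
    ultimately obtain j where "j < N" "(t j, z j) \<in> ord" "r (t j) = r (z j)" "\<forall>i>j. t i = z i"
      by (rule lex_lt_tail_classE)
    then show False using z(2)[of j] XB_edge[OF \<open>t \<in> XB E s r\<close>] by (auto simp: emin_def)
  qed
  then show ?thesis
    using tail_class_lex_lt_total[OF t(1) self_in_tail_class[OF z(1)] t(2)] by blast
qed

lemma lexless_iff_lex_lt:
  "lexless ord p q \<longleftrightarrow> length p = length q \<and> lex_lt (length p) (nth p) (nth q)"
  unfolding lexless_def lex_lt_def by auto

lemma root_paths_lexless_total:
  assumes p: "p \<in> root_paths d u" and q: "q \<in> root_paths d u" and "p \<noteq> q"
  shows "lexless ord p q \<or> lexless ord q p"
proof -
  have len: "length p = d" "length q = d" using p q by (simp_all add: root_paths_iff)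
  have "lex_lt d (nth p) (nth q) \<or> lex_lt d (nth q) (nth p)"
  proof (rule lex_lt_total)
    show "\<exists>j<d. p!j \<noteq> q!j" using \<open>p \<noteq> q\<close> len nth_equalityI by metis
    show "p!j \<in> E j \<and> q!j \<in> E j" if "j < d" for j
      using p q that by (simp add: root_paths_iff)
    fix j assume j: "j < d" "\<forall>i. j < i \<and> i < d \<longrightarrow> p!i = q!i"
    show "r (p!j) = r (q!j)"
    proof (cases "Suc j < d")
      case True
      then show ?thesis using j p q by (simp add: root_paths_iff)
    next
      case False
      then have "j = d - 1" "d \<noteq> 0" using j by auto
      then show ?thesis using p q by (simp add: root_paths_iff)
    qed
  qed
  then show ?thesis using len by (auto simp: lexless_iff_lex_lt)
qed

lemma min_root_path:
  assumes "u \<in> V d"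
  shows "is_min_in ord (root_paths d u) (THE f. is_min_in ord (root_paths d u) f)"
proof -
  have "\<exists>!f. f \<in> root_paths d u \<and> (\<forall>q\<in>root_paths d u. q \<noteq> f \<longrightarrow> lexless ord f q)"
  proof (rule finite_total_ex1_least)
    show "finite (root_paths d u)" by (rule finite_root_paths)
    show "root_paths d u \<noteq> {}" using root_paths_exist[OF assms] by blast
    show "lexless ord p t" if "lexless ord p q" "lexless ord q t" for p q t
      using that lex_lt_trans by (auto simp: lexless_iff_lex_lt)
    show "\<not> lexless ord q p" if "lexless ord p q" for p q
      using that lex_lt_asym by (auto simp: lexless_iff_lex_lt)
  qed (rule root_paths_lexless_total)
  then show ?thesis unfolding is_min_in_def by (rule theI')
qed

lemma min_prefix_least_in_tail_class:
  assumes y: "y \<in> XB E s r" and min: "is_min_in ord (root_paths d (s (y d))) (map y [0..<d])"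
    and t: "t \<in> tail_class d y" "t \<noteq> y"
  shows "lex_lt d y t"
proof -
  have tXB: "t \<in> XB E s r" and t_above: "\<forall>n\<ge>d. t n = y n"
    using t(1) by (simp_all add: tail_class_def)
  have "map t [0..<d] \<in> root_paths d (s (y d))"
    using prefix_in_root_paths[OF tXB, of d] t_above by simp
  moreover have "map t [0..<d] \<noteq> map y [0..<d]"
  proof
    assume "map t [0..<d] = map y [0..<d]"
    then have "t n = y n" for n
      using t_above by (cases "n < d") (auto simp: map_eq_conv)
    then show False using t(2) by blast
  qed
  ultimately have "lexless ord (map y [0..<d]) (map t [0..<d])"
    using min by (simp add: is_min_in_def)
  then show ?thesis
    by (simp add: lexless_iff_lex_lt lex_lt_cong[of d "nth (map y [0..<d])" y])
qed

lemma esucc_next_edge: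
  assumes "e \<in> E n" "\<not> emax E r ord n e"
  defines "e' \<equiv> esucc E r ord n e"
  shows "e' \<in> E n \<and> r e' = r e \<and> (e, e') \<in> ord \<and>
    (\<forall>e''\<in>E n. r e'' = r e \<and> (e, e'') \<in> ord \<longrightarrow> e'' = e' \<or> (e', e'') \<in> ord)"
proof -
  define A where "A = {e' \<in> E n. r e' = r e \<and> (e, e') \<in> ord}"
  have "\<exists>!m. m \<in> A \<and> (\<forall>a\<in>A. a \<noteq> m \<longrightarrow> (m, a) \<in> ord)"
  proof (rule finite_total_ex1_least)
    show "finite A" using finite_E by (simp add: A_def)
    show "A \<noteq> {}" using assms(1,2) by (auto simp: A_def emax_def)
    show "\<not> (b, a) \<in> ord" if "(a, b) \<in> ord" for a b
      using that ord_trans ord_irrefl by blast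
    show "(a, b) \<in> ord \<or> (b, a) \<in> ord" if "a \<in> A" "b \<in> A" "a \<noteq> b" for a b
      using that ord_total[of a n b] by (simp add: A_def)
  qed (rule ord_trans)
  moreover have "(m \<in> A \<and> (\<forall>a\<in>A. a \<noteq> m \<longrightarrow> (m, a) \<in> ord)) \<longleftrightarrow>
      m \<in> E n \<and> r m = r e \<and> (e, m) \<in> ord \<and>
      (\<forall>e''\<in>E n. r e'' = r e \<and> (e, e'') \<in> ord \<longrightarrow> e'' = m \<or> (m, e'') \<in> ord)" for m
    unfolding A_def by auto
  ultimately show ?thesis
    unfolding e'_def esucc_def by (simp only:) (rule theI')
qed

lemma Xmax_cluster:
  assumes y: "\<And>N. y N \<in> XB E s r" and max: "\<And>N j. j < N \<Longrightarrow> emax E r ord j (y N j)"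
  obtains z where "z \<in> Xmax E s r ord" "\<And>L. \<exists>N. \<forall>j<L. y N j = z j"
proof -
  obtain z where z: "\<And>L. infinite {N. \<forall>j<L. y N j = z j}"
    by (rule finitely_branching_limit[of y E]) (use XB_edge[OF y] finite_E in auto)
  have level: "z L \<in> E L \<and> r (z L) = s (z (Suc L)) \<and> emax E r ord L (z L)" for L
  proof -
    obtain N where N: "N > Suc L" "N \<in> {N. \<forall>j<Suc (Suc L). y N j = z j}"
      using z[of "Suc (Suc L)"] unfolding infinite_nat_iff_unbounded by blast
    then have "y N L = z L" "y N (Suc L) = z (Suc L)" by auto
    then show ?thesis using XB_edge[OF y[of N], of L] XB_range[OF y[of N], of L] max[of L N] N(1) by auto
  qed
  show thesis
  proof (rule that)
    show "z \<in> Xmax E s r ord" using level by (simp add: Xmax_def XB_def)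
    show "\<exists>N. \<forall>j<L. y N j = z j" for L using not_finite_existsD[OF z[of L]] .
  qed
qed

end

locale k_simple_ordered_bratteli = ordered_bratteli V E s r v0 ord
  for V :: "nat \<Rightarrow> 'v set" and E :: "nat \<Rightarrow> 'e set" and s r :: "'e \<Rightarrow> 'v" and v0 :: 'v
    and ord :: "('e \<times> 'e) set" +
  fixes k :: nat and Vi :: "nat \<Rightarrow> nat \<Rightarrow> 'v set" and zmax zmin :: "nat \<Rightarrow> nat \<Rightarrow> 'e"
  assumes k_simple_ordered: "k_simple_ordered V E s r v0 ord k Vi zmax zmin"
begin

abbreviation \<sigma> :: "(nat \<Rightarrow> 'e) \<Rightarrow> (nat \<Rightarrow> 'e)" where
  "\<sigma> \<equiv> vershik E s r v0 ord k zmax zmin"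

lemma k_simple: "k_simple V E s r k Vi"
  using k_simple_ordered by (simp add: k_simple_ordered_def)

lemma Vi_disjoint: "n \<ge> 1 \<Longrightarrow> i \<in> {1..k} \<Longrightarrow> j \<in> {1..k} \<Longrightarrow> i \<noteq> j \<Longrightarrow> Vi n i \<inter> Vi n j = {}"
  using k_simple by (simp add: k_simple_def)

lemma Vi_source:
  "n \<ge> 1 \<Longrightarrow> i \<in> {1..k} \<Longrightarrow> e \<in> E n \<Longrightarrow> r e \<in> Vi (Suc n) i \<Longrightarrow> s e \<in> Vi n i"
  using k_simple unfolding k_simple_def by blast

lemma Vi_connected:
  "n \<ge> 1 \<Longrightarrow> i \<in> {1..k} \<Longrightarrow> \<exists>m>n. \<forall>w\<in>Vi m i. \<forall>v\<in>Vi n i. connected_to E s r n m v w"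
  using k_simple by (simp add: k_simple_def)

lemma zmax_XB: "i \<in> {1..k} \<Longrightarrow> zmax i \<in> XB E s r"
  and zmin_XB: "i \<in> {1..k} \<Longrightarrow> zmin i \<in> XB E s r"
  and zmax_Vi: "i \<in> {1..k} \<Longrightarrow> n \<ge> 1 \<Longrightarrow> s (zmax i n) \<in> Vi n i"
  and zmin_Vi: "i \<in> {1..k} \<Longrightarrow> n \<ge> 1 \<Longrightarrow> s (zmin i n) \<in> Vi n i"
  using k_simple_ordered by (simp_all add: k_simple_ordered_def)

lemma Xmax_eq: "Xmax E s r ord = zmax ` {1..k}"
  and Xmin_eq: "Xmin E s r ord = zmin ` {1..k}"
  using k_simple_ordered by (simp_all add: k_simple_ordered_def)

section \<open>The Vershik map\<close>

lemma vershik_step: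
  assumes x: "x \<in> XB E s r" and non_max: "\<not> emax E r ord j (x j)"
  obtains d where "d \<le> j" "\<forall>i<d. emax E r ord i (x i)" "\<sigma> x \<in> tail_class (Suc d) x"
    "(x d, \<sigma> x d) \<in> ord"
    "\<forall>e\<in>E d. r e = r (x d) \<and> (x d, e) \<in> ord \<longrightarrow> e = \<sigma> x d \<or> (\<sigma> x d, e) \<in> ord"
    "\<forall>t\<in>tail_class d (\<sigma> x). t \<noteq> \<sigma> x \<longrightarrow> lex_lt d (\<sigma> x) t"
proof -
  define d where "d = (LEAST d. \<not> emax E r ord d (x d))"
  have d: "\<not> emax E r ord d (x d)" unfolding d_def using non_max by (rule LeastI)
  have "d \<le> j" unfolding d_def using non_max by (rule Least_le)
  have below: "\<forall>i<d. emax E r ord i (x i)" unfolding d_def using not_less_Least by blast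
  define e' where "e' = esucc E r ord d (x d)"
  have e': "e' \<in> E d" "r e' = r (x d)" "(x d, e') \<in> ord"
    "\<forall>e\<in>E d. r e = r (x d) \<and> (x d, e) \<in> ord \<longrightarrow> e = e' \<or> (e', e) \<in> ord"
    using esucc_next_edge[OF XB_edge[OF x] d] by (simp_all add: e'_def)
  define f where "f = (THE f. is_min_in ord (root_paths d (s e')) f)"
  have f: "is_min_in ord (root_paths d (s e')) f"
    unfolding f_def using e'(1) source_image by (intro min_root_path) blast
  then have f_path: "f \<in> root_paths d (s e')" by (simp add: is_min_in_def)
  then have len_f: "length f = d" by (simp add: root_paths_iff)
  have "\<not> (\<exists>i\<in>{1..k}. x = zmax i)"
    using non_max Xmax_eq by (auto simp: Xmax_def)
  then have \<sigma>x: "\<sigma> x = (\<lambda>n. if n < d then f!n else if n = d then e' else x n)"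
    unfolding vershik_def Let_def d_def[symmetric] e'_def[symmetric] f_def[symmetric] by simp
  have "f @ [e'] \<in> root_paths (Suc d) (s (x (Suc d)))"
    using root_paths_snoc[OF f_path e'(1)] e'(2) XB_range[OF x] by simp
  moreover have "\<sigma> x = (\<lambda>n. if n < Suc d then (f @ [e'])!n else x n)"
    unfolding \<sigma>x by (auto simp: nth_append len_f)
  ultimately have \<sigma>xXB: "\<sigma> x \<in> XB E s r"
    using splice_root_path_XB[OF _ x] by simp
  then have tail: "\<sigma> x \<in> tail_class (Suc d) x"
    by (simp add: tail_class_def \<sigma>x)
  have "map (\<sigma> x) [0..<d] = f"
    by (simp add: \<sigma>x len_f list_eq_iff_nth_eq)
  then have "is_min_in ord (root_paths d (s (\<sigma> x d))) (map (\<sigma> x) [0..<d])"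
    using f by (simp add: \<sigma>x)
  then have "\<forall>t\<in>tail_class d (\<sigma> x). t \<noteq> \<sigma> x \<longrightarrow> lex_lt d (\<sigma> x) t"
    using min_prefix_least_in_tail_class[OF \<sigma>xXB] by blast
  then show thesis
    using that[OF \<open>d \<le> j\<close> below tail] e'(3,4) by (simp add: \<sigma>x)
qed

lemma vershik_tail_successor:
  assumes x: "x \<in> XB E s r" and "j < N" and non_max: "\<not> emax E r ord j (x j)"
  shows "\<sigma> x \<in> tail_class N x" "lex_lt N x (\<sigma> x)"
proof -
  obtain d where "d \<le> j" "\<sigma> x \<in> tail_class (Suc d) x" "(x d, \<sigma> x d) \<in> ord"
    using vershik_step[OF x non_max] by metis
  moreover have "d < N" using \<open>d \<le> j\<close> \<open>j < N\<close> by simp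
  ultimately show "\<sigma> x \<in> tail_class N x" "lex_lt N x (\<sigma> x)"
    unfolding lex_lt_def by (auto simp: tail_class_def intro!: exI[of _ d])
qed

lemma vershik_immediate_successor:
  assumes x: "x \<in> XB E s r" and "j < N" and non_max: "\<not> emax E r ord j (x j)"
    and t: "t \<in> tail_class N x" "lex_lt N x t"
  shows "t = \<sigma> x \<or> lex_lt N (\<sigma> x) t"
proof -
  obtain d where "d \<le> j" and below: "\<forall>i<d. emax E r ord i (x i)"
    and tail: "\<sigma> x \<in> tail_class (Suc d) x"
    and next_edge: "\<forall>e\<in>E d. r e = r (x d) \<and> (x d, e) \<in> ord \<longrightarrow> e = \<sigma> x d \<or> (\<sigma> x d, e) \<in> ord"
    and least: "\<forall>t\<in>tail_class d (\<sigma> x). t \<noteq> \<sigma> x \<longrightarrow> lex_lt d (\<sigma> x) t"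
    by (rule vershik_step[OF x non_max])
  have "d < N" using \<open>d \<le> j\<close> \<open>j < N\<close> by simp
  have above: "\<sigma> x n = x n" if "d < n" for n
    using tail that by (simp add: tail_class_def)
  have tXB: "t \<in> XB E s r" using t(1) by (simp add: tail_class_def)
  obtain l where l: "l < N" "(x l, t l) \<in> ord" "r (x l) = r (t l)" "\<forall>i>l. x i = t i"
    using t(2,1) x by (rule lex_lt_tail_classE)
  have \<sigma>x_lt_t: "lex_lt N (\<sigma> x) t" if "(\<sigma> x l, t l) \<in> ord" "d \<le> l"
    unfolding lex_lt_def using that l(1,4) above by (intro exI[of _ l]) auto
  consider "l < d" | "l = d" | "d < l" by linarith
  then show ?thesis
  proof cases
    case 1
    then show ?thesis
      using below l(2,3) XB_edge[OF tXB, of l] by (auto simp: emax_def)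
  next
    case 2
    have "t d = \<sigma> x d \<or> (\<sigma> x d, t d) \<in> ord"
      using next_edge XB_edge[OF tXB, of d] l(2,3) 2 by auto
    then show ?thesis
    proof
      assume "t d = \<sigma> x d"
      then have "t \<in> tail_class d (\<sigma> x)"
        using tXB l(4) above 2 by (auto simp: tail_class_def le_less)
      then have "t = \<sigma> x \<or> lex_lt d (\<sigma> x) t" using least by blast
      moreover have "\<sigma> x i = t i" if "d \<le> i" "i < N" for i
        using \<open>t d = \<sigma> x d\<close> l(4) above 2 that by (cases "i = d") auto
      ultimately show ?thesis using lex_lt_extend \<open>d < N\<close> by auto
    qed (use \<sigma>x_lt_t 2 in simp)
  next
    case 3
    then show ?thesis using \<sigma>x_lt_t l(2) above by simp
  qed
qed

lemma vershik_orbit_reaches_tail_class: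
  assumes "x \<in> XB E s r" "y \<in> tail_class N x" "y = x \<or> lex_lt N x y"
  shows "\<exists>j. (\<sigma> ^^ j) x = y"
  using assms
proof (induction "card {z \<in> tail_class N x. lex_lt N x z}" arbitrary: x rule: less_induct)
  case less
  show ?case
  proof (cases "y = x")
    case True
    then show ?thesis by (intro exI[of _ 0]) simp
  next
    case False
    then have lt: "lex_lt N x y" using less.prems(3) by simp
    then obtain j where j: "j < N" "(x j, y j) \<in> ord" "r (x j) = r (y j)"
      using less.prems(2,1) by (rule lex_lt_tail_classE)
    have yXB: "y \<in> XB E s r" using less.prems(2) by (simp add: tail_class_def)
    then have non_max: "\<not> emax E r ord j (x j)"
      using j(2,3) XB_edge[OF yXB, of j] by (auto simp: emax_def)
    note succ = vershik_tail_successor[OF less.prems(1) j(1) non_max]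
    have same_class: "tail_class N (\<sigma> x) = tail_class N x" by (rule tail_class_eq[OF succ(1)])
    have \<sigma>xXB: "\<sigma> x \<in> XB E s r" using succ(1) by (simp add: tail_class_def)
    let ?above = "\<lambda>x. {z \<in> tail_class N x. lex_lt N x z}"
    have "?above (\<sigma> x) \<subseteq> ?above x - {\<sigma> x}"
      using same_class lex_lt_trans[OF succ(2)] lex_lt_irrefl by auto
    moreover have "\<sigma> x \<in> ?above x" using succ(1,2) by simp
    moreover have "finite (?above x)" using finite_tail_class by simp
    ultimately have "card (?above (\<sigma> x)) < card (?above x)"
      by (meson card_Diff1_less card_mono finite_Diff le_less_trans)
    moreover have "y \<in> tail_class N (\<sigma> x)" using less.prems(2) same_class by simp
    ultimately obtain i where "(\<sigma> ^^ i) (\<sigma> x) = y"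
      using less.hyps[OF _ \<sigma>xXB] vershik_immediate_successor[OF less.prems(1) j(1) non_max less.prems(2) lt]
      by blast
    then have "(\<sigma> ^^ Suc i) x = y" by (simp add: funpow_Suc_right del: funpow.simps)
    then show ?thesis by blast
  qed
qed

lemma vershik_orbit_reaches_max_prefix:
  assumes x: "x \<in> XB E s r"
  obtains j where "(\<sigma> ^^ j) x \<in> XB E s r" "\<And>i. i < N \<Longrightarrow> emax E r ord i ((\<sigma> ^^ j) x i)"
proof -
  have "\<exists>!m. m \<in> tail_class N x \<and> (\<forall>a\<in>tail_class N x. a \<noteq> m \<longrightarrow> lex_lt N a m)"
  proof (rule finite_total_ex1_least)
    show "tail_class N x \<noteq> {}" using self_in_tail_class[OF x] by blast
    show "a \<noteq> b \<Longrightarrow> lex_lt N b a \<or> lex_lt N a b"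
      if "a \<in> tail_class N x" "b \<in> tail_class N x" for a b
      using tail_class_lex_lt_total[OF that] by blast
  qed (use finite_tail_class lex_lt_trans lex_lt_asym in blast)+
  then obtain m where m: "m \<in> tail_class N x" "\<And>a. a \<in> tail_class N x \<Longrightarrow> a \<noteq> m \<Longrightarrow> lex_lt N a m"
    by blast
  have mXB: "m \<in> XB E s r" using m(1) by (simp add: tail_class_def)
  have max_prefix: "emax E r ord i (m i)" if "i < N" for i
  proof (rule ccontr)
    assume "\<not> emax E r ord i (m i)"
    note succ = vershik_tail_successor[OF mXB that this]
    have "\<sigma> m \<in> tail_class N x" using succ(1) tail_class_eq[OF m(1)] by simp
    moreover have "\<sigma> m \<noteq> m" using succ(2) lex_lt_irrefl by auto
    ultimately show False using m(2) succ(2) lex_lt_asym by blast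
  qed
  have "m = x \<or> lex_lt N x m"
    using m(2) self_in_tail_class[OF x] by blast
  then obtain j where "(\<sigma> ^^ j) x = m"
    using vershik_orbit_reaches_tail_class[OF x m(1)] by blast
  then show thesis using mXB max_prefix by (intro that) auto
qed

lemma vershik_orbit_from_tail_class:
  assumes y: "y \<in> XB E s r" "y \<notin> Xmin E s r ord"
  obtains y0 N j where "y0 \<in> tail_class N y" "\<sigma> ((\<sigma> ^^ j) y0) = y"
proof -
  obtain d where "\<not> emin E r ord d (y d)" using y by (auto simp: Xmin_def)
  then obtain e where e: "e \<in> E d" "r e = r (y d)" "(e, y d) \<in> ord"
    using XB_edge[OF y(1)] by (auto simp: emin_def)
  have "s e \<in> V d" using e(1) source_image by blast
  then obtain p where p: "p \<in> root_paths d (s e)" using root_paths_exist by blast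
  have len_p: "length p = d" using p by (simp add: root_paths_iff)
  define y0 where "y0 = (\<lambda>j. if j < Suc d then (p @ [e])!j else y j)"
  have "p @ [e] \<in> root_paths (Suc d) (s (y (Suc d)))"
    using root_paths_snoc[OF p e(1)] e(2) XB_range[OF y(1)] by simp
  then have y0XB: "y0 \<in> XB E s r" unfolding y0_def by (rule splice_root_path_XB[OF _ y(1)])
  have y0_d: "y0 d = e" by (simp add: y0_def nth_append len_p)
  have y_tail: "y \<in> tail_class (Suc d) y0" and y0_tail: "y0 \<in> tail_class (Suc d) y"
    using y(1) y0XB by (simp_all add: tail_class_def y0_def)
  have "lex_lt (Suc d) y0 y"
    unfolding lex_lt_def using e(3) y0_d by (intro exI[of _ d]) auto
  then obtain j where j: "(\<sigma> ^^ j) y0 = y"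
    using vershik_orbit_reaches_tail_class[OF y0XB y_tail] by blast
  have "j \<noteq> 0"
  proof
    assume "j = 0"
    then have "y0 = y" using j by simp
    then show False using y0_d e(3) ord_irrefl by simp
  qed
  then obtain j' where "j = Suc j'" using not0_implies_Suc by blast
  then show thesis using that[OF y0_tail] j by simp
qed

section \<open>Minimal subsets\<close>

definition Vi_paths :: "nat \<Rightarrow> (nat \<Rightarrow> 'e) set" where
  "Vi_paths i = {x \<in> XB E s r. \<forall>n\<ge>1. s (x n) \<in> Vi n i}"

lemma Vi_paths_XB: "x \<in> Vi_paths i \<Longrightarrow> x \<in> XB E s r"
  by (simp add: Vi_paths_def)

lemma zmax_Vi_paths: "i \<in> {1..k} \<Longrightarrow> zmax i \<in> Vi_paths i"
  and zmin_Vi_paths: "i \<in> {1..k} \<Longrightarrow> zmin i \<in> Vi_paths i"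
  by (simp_all add: Vi_paths_def zmax_XB zmin_XB zmax_Vi zmin_Vi)

lemma Vi_paths_disjoint:
  "i \<in> {1..k} \<Longrightarrow> j \<in> {1..k} \<Longrightarrow> x \<in> Vi_paths i \<Longrightarrow> x \<in> Vi_paths j \<Longrightarrow> i = j"
  using Vi_disjoint[of 1 i j] by (auto simp: Vi_paths_def)

lemma Vi_path_down:
  assumes "x \<in> XB E s r" "i \<in> {1..k}" "1 \<le> n" "n \<le> m" "s (x m) \<in> Vi m i"
  shows "s (x n) \<in> Vi n i"
  using assms(4,5)
proof (induction n rule: inc_induct)
  case (step l)
  then show ?case
    using Vi_source[of l i "x l"] assms(1-3) by (simp add: XB_edge XB_range)
qed

lemma tail_class_Vi_paths:
  assumes "x \<in> Vi_paths i" "i \<in> {1..k}" "y \<in> tail_class N x"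
  shows "y \<in> Vi_paths i"
proof -
  have y: "y \<in> XB E s r" "\<forall>n\<ge>N. y n = x n" using assms(3) by (simp_all add: tail_class_def)
  have "s (y n) \<in> Vi n i" if "n \<ge> 1" for n
  proof (rule Vi_path_down[OF y(1) assms(2) that])
    show "n \<le> max n N" by simp
    show "s (y (max n N)) \<in> Vi (max n N) i"
      using assms(1) y(2) that by (simp add: Vi_paths_def)
  qed
  then show ?thesis using y(1) by (simp add: Vi_paths_def)
qed

lemma vershik_zmax: "i \<in> {1..k} \<Longrightarrow> \<sigma> (zmax i) = zmin i"
proof -
  assume i: "i \<in> {1..k}"
  define j where "j = (SOME j. j \<in> {1..k} \<and> zmax i = zmax j)"
  have j: "j \<in> {1..k}" "zmax i = zmax j"
    using someI[of "\<lambda>j. j \<in> {1..k} \<and> zmax i = zmax j" i] i by (simp_all add: j_def)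
  then have "i = j" using Vi_paths_disjoint[OF i j(1)] zmax_Vi_paths i by metis
  then show ?thesis using i by (auto simp: vershik_def j_def)
qed

lemma closedin_Vi_paths: "closedin (XB_topology E s r) (Vi_paths i)"
  unfolding closedin_def topspace_XB_topology
proof
  show "Vi_paths i \<subseteq> XB E s r" using Vi_paths_XB by blast
  show "openin (XB_topology E s r) (XB E s r - Vi_paths i)"
  proof (subst openin_subopen, intro ballI)
    fix y assume y: "y \<in> XB E s r - Vi_paths i"
    then obtain n where n: "n \<ge> 1" "s (y n) \<notin> Vi n i" by (auto simp: Vi_paths_def)
    let ?C = "{x \<in> XB E s r. \<forall>j<Suc n. x j = y j}"
    have "?C \<subseteq> XB E s r - Vi_paths i"
    proof
      fix x assume x: "x \<in> ?C"
      have "x \<notin> Vi_paths i"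
      proof
        assume "x \<in> Vi_paths i"
        then have "s (x n) \<in> Vi n i" using n(1) by (simp add: Vi_paths_def)
        then show False using n(2) x by simp
      qed
      then show "x \<in> XB E s r - Vi_paths i" using x by simp
    qed
    moreover have "y \<in> ?C" using y by simp
    ultimately show "\<exists>T. openin (XB_topology E s r) T \<and> y \<in> T \<and> T \<subseteq> XB E s r - Vi_paths i"
      using openin_XB_topology_cylinder[of E s r "Suc n" y] by blast
  qed
qed

lemma vershik_Vi_paths:
  assumes i: "i \<in> {1..k}" and x: "x \<in> Vi_paths i"
  shows "\<sigma> x \<in> Vi_paths i"
proof (cases "x \<in> Xmax E s r ord")
  case True
  then obtain j where j: "j \<in> {1..k}" "x = zmax j" using Xmax_eq by auto
  then have "i = j" using Vi_paths_disjoint[OF i j(1) x] zmax_Vi_paths by simp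
  then show ?thesis using vershik_zmax zmin_Vi_paths i j(2) by simp
next
  case False
  have xXB: "x \<in> XB E s r" using x by (rule Vi_paths_XB)
  then obtain j where "\<not> emax E r ord j (x j)" using False by (auto simp: Xmax_def)
  then have "\<sigma> x \<in> tail_class (Suc j) x" by (rule vershik_tail_successor(1)[OF xXB lessI])
  then show ?thesis using tail_class_Vi_paths[OF x i] by blast
qed

lemma Vi_paths_subset_vershik_image:
  assumes i: "i \<in> {1..k}"
  shows "Vi_paths i \<subseteq> \<sigma> ` Vi_paths i"
proof
  fix y assume y: "y \<in> Vi_paths i"
  show "y \<in> \<sigma> ` Vi_paths i"
  proof (cases "y \<in> Xmin E s r ord")
    case True
    then obtain j where j: "j \<in> {1..k}" "y = zmin j" using Xmin_eq by auto
    then have "y = \<sigma> (zmax i)"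
      using Vi_paths_disjoint[OF i j(1) y] zmin_Vi_paths vershik_zmax[OF i] by simp
    then show ?thesis using zmax_Vi_paths[OF i] by (rule image_eqI)
  next
    case False
    then obtain y0 N j where y0: "y0 \<in> tail_class N y" and "\<sigma> ((\<sigma> ^^ j) y0) = y"
      using vershik_orbit_from_tail_class Vi_paths_XB[OF y] by metis
    moreover have "(\<sigma> ^^ j) y0 \<in> Vi_paths i"
      using funpow_in_invariant[of \<sigma> "Vi_paths i"] vershik_Vi_paths[OF i]
        tail_class_Vi_paths[OF y i y0] by blast
    ultimately show ?thesis by (metis image_eqI)
  qed
qed

lemma closed_invariant_contains_zmax:
  assumes B: "closedin (XB_topology E s r) B" "\<sigma> ` B \<subseteq> B" and x: "x \<in> B"
  obtains i where "i \<in> {1..k}" "zmax i \<in> B"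
proof -
  have xXB: "x \<in> XB E s r"
    using closedin_subset[OF B(1)] x by (auto simp: topspace_XB_topology)
  have "\<forall>N. \<exists>j. (\<sigma> ^^ j) x \<in> XB E s r \<and> (\<forall>i<N. emax E r ord i ((\<sigma> ^^ j) x i))"
    using vershik_orbit_reaches_max_prefix[OF xXB] by metis
  then obtain J where J: "\<forall>N. (\<sigma> ^^ J N) x \<in> XB E s r \<and> (\<forall>i<N. emax E r ord i ((\<sigma> ^^ J N) x i))"
    by (rule choice[THEN exE])
  obtain z where z: "z \<in> Xmax E s r ord" "\<And>L. \<exists>N. \<forall>j<L. (\<sigma> ^^ J N) x j = z j"
    by (rule Xmax_cluster[of "\<lambda>N. (\<sigma> ^^ J N) x"]) (use J in simp_all)
  have "z \<in> B"
  proof (rule closedin_XB_topology_limit[OF B(1)])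
    show "z \<in> XB E s r" using z(1) by (simp add: Xmax_def)
    show "\<exists>y\<in>B. \<forall>j<L. y j = z j" for L
      using z(2)[of L] funpow_in_invariant[OF B(2) x] by blast
  qed
  then show thesis using z(1) Xmax_eq that by auto
qed

lemma closed_invariant_contains_Vi_paths:
  assumes i: "i \<in> {1..k}" and B: "closedin (XB_topology E s r) B" "\<sigma> ` B \<subseteq> B"
    and zmax: "zmax i \<in> B"
  shows "Vi_paths i \<subseteq> B"
proof
  have zmin_B: "zmin i \<in> B" using B(2) zmax vershik_zmax[OF i] by (metis image_subset_iff)
  have zXB: "zmin i \<in> XB E s r" by (rule zmin_XB[OF i])
  have zmin_emin: "emin E r ord n (zmin i n)" for n
    using Xmin_eq i by (auto simp: Xmin_def)
  fix y assume y: "y \<in> Vi_paths i"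
  have yXB: "y \<in> XB E s r" using y by (rule Vi_paths_XB)
  show "y \<in> B"
  proof (rule closedin_XB_topology_limit[OF B(1) yXB])
    fix L
    obtain m where m: "Suc L < m" "\<forall>w\<in>Vi m i. \<forall>v\<in>Vi (Suc L) i. connected_to E s r (Suc L) m v w"
      using Vi_connected[of "Suc L" i] i by auto
    have "s (y (Suc L)) \<in> Vi (Suc L) i" using y by (simp add: Vi_paths_def)
    then obtain q where q: "q \<in> paths_between E s r (Suc L) m (s (y (Suc L))) (s (zmin i m))"
      using m zmin_Vi[OF i, of m] by (auto simp: connected_to_def)
    define g where "g = map y [0..<Suc L] @ q"
    have "g \<in> root_paths m (s (zmin i m))"
      unfolding g_def by (rule root_paths_append[OF prefix_in_root_paths[OF yXB] q m(1)])
    define y' where "y' = (\<lambda>j. if j < m then g!j else zmin i j)"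
    have "y' \<in> XB E s r"
      unfolding y'_def by (rule splice_root_path_XB[OF \<open>g \<in> _\<close> zXB])
    then have y'_tail: "y' \<in> tail_class m (zmin i)" by (simp add: tail_class_def y'_def)
    then have "y' = zmin i \<or> lex_lt m (zmin i) y'"
      using emin_path_least_in_tail_class[OF zXB zmin_emin] by blast
    then obtain j where "(\<sigma> ^^ j) (zmin i) = y'"
      using vershik_orbit_reaches_tail_class[OF zXB y'_tail] by blast
    then have "y' \<in> B" using funpow_in_invariant[OF B(2) zmin_B] by metis
    moreover have "\<forall>j<L. y' j = y j" using m(1) by (simp add: y'_def g_def nth_append)
    ultimately show "\<exists>y'\<in>B. \<forall>j<L. y' j = y j" by blast
  qed
qed

lemma minimal_subset_Vi_paths:
  assumes i: "i \<in> {1..k}"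
  shows "minimal_subset (XB_topology E s r) \<sigma> (Vi_paths i)"
  unfolding minimal_subset_def
proof (intro conjI allI impI)
  show "Vi_paths i \<noteq> {}" using zmax_Vi_paths[OF i] by blast
  show "closedin (XB_topology E s r) (Vi_paths i)" by (rule closedin_Vi_paths)
  show "\<sigma> ` Vi_paths i = Vi_paths i"
    using vershik_Vi_paths[OF i] Vi_paths_subset_vershik_image[OF i] by blast
  fix B
  assume B: "B \<subseteq> Vi_paths i \<and> B \<noteq> {} \<and> closedin (XB_topology E s r) B \<and> \<sigma> ` B = B"
  then have closed: "closedin (XB_topology E s r) B" and invariant: "\<sigma> ` B \<subseteq> B"
    by simp_all
  obtain x where "x \<in> B" using B by blast
  then obtain j where j: "j \<in> {1..k}" "zmax j \<in> B"
    by (rule closed_invariant_contains_zmax[OF closed invariant])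
  then have "zmax j \<in> Vi_paths i" using B by blast
  then have "j = i" using Vi_paths_disjoint[OF i j(1) _ zmax_Vi_paths[OF j(1)]] by simp
  then have "Vi_paths i \<subseteq> B"
    using closed_invariant_contains_Vi_paths[OF i closed invariant] j(2) by simp
  then show "B = Vi_paths i" using B by blast
qed

lemma minimal_subset_is_Vi_paths:
  assumes A: "minimal_subset (XB_topology E s r) \<sigma> A"
  shows "A \<in> Vi_paths ` {1..k}"
proof -
  have closed: "closedin (XB_topology E s r) A" and invariant: "\<sigma> ` A = A" and "A \<noteq> {}"
    using A by (simp_all add: minimal_subset_def)
  then obtain x where "x \<in> A" by blast
  then obtain i where i: "i \<in> {1..k}" "zmax i \<in> A"
    by (rule closed_invariant_contains_zmax[OF closed, unfolded invariant, OF order_refl])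
  have "Vi_paths i \<subseteq> A"
    using closed_invariant_contains_Vi_paths[OF i(1) closed] invariant i(2) by simp
  then have "Vi_paths i = A"
    using A minimal_subset_Vi_paths[OF i(1)] by (simp add: minimal_subset_def)
  then show ?thesis using i(1) by blast
qed

lemma minimal_subsets_eq: "{A. minimal_subset (XB_topology E s r) \<sigma> A} = Vi_paths ` {1..k}"
  using minimal_subset_is_Vi_paths minimal_subset_Vi_paths by blast

lemma inj_on_Vi_paths: "inj_on Vi_paths {1..k}"
proof (rule inj_onI)
  fix i j assume "i \<in> {1..k}" "j \<in> {1..k}" "Vi_paths i = Vi_paths j"
  then show "i = j" using Vi_paths_disjoint zmax_Vi_paths by metis
qed

end

theorem theorem5p10:
  fixes V :: "nat \<Rightarrow> 'v set" and E :: "nat \<Rightarrow> 'e set"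
    and s r :: "'e \<Rightarrow> 'v" and v0 :: 'v and ord :: "('e \<times> 'e) set" and k :: nat
    and Vi :: "nat \<Rightarrow> nat \<Rightarrow> 'v set" and zmax zmin :: "nat \<Rightarrow> nat \<Rightarrow> 'e"
  assumes "bratteli_diagram V E s r v0"
    and "ordered_diagram V E r ord"
    and "k_simple_ordered V E s r v0 ord k Vi zmax zmin"
    and "non_elementary V E s r k Vi"
  shows "finite {A. minimal_subset (XB_topology E s r) (vershik E s r v0 ord k zmax zmin) A}
       \<and> card {A. minimal_subset (XB_topology E s r) (vershik E s r v0 ord k zmax zmin) A} = k"
proof -
  interpret k_simple_ordered_bratteli V E s r v0 ord k Vi zmax zmin
    using assms(1-3) by unfold_locales
  show ?thesis
    unfolding minimal_subsets_eq using card_image[OF inj_on_Vi_paths] by simp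
qed

end
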